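(* The assignment $S\mapsto \mathbf{H}(S)$ on objects and $\varphi\mapsto\mathbf{H}(\varphi)$ (restriction of $\varphi$ to $S$) on morphisms is a functor from the category of finite association schemes with admissible morphisms to the category of finite hypergroups with hypergroup homomorphisms.
   Context: For a nonempty set $X$: $1_X=\{(x,x):x\in X\}$; for $p\subseteq X\times X$, $p^*=\{(a,b):(b,a)\in p\}$ and $xp=\{y\in X:(x,y)\in p\}$. An association scheme on $X$ is a partition $S$ of $X\times X$ with $1_X\in S$, $p^*\in S$ whenever $p\in S$, and such that for all $p,q,r\in S$ there is a cardinal $a_{pq}^r$ with $|yp\cap zq^*|=a_{pq}^r$ for all $y\in X$, $z\in yr$; it is finite if $X$ is finite. Complex multiplication: $pq=\{r\in S:a_{pq}^r\ge1\}$. $\mathbf{H}(S)$ is the hypergroup on $S$ with hyperoperation complex multiplication, identity $1_X$, inverse $p^*$. A hypergroup is a nonempty set $H$ with $*:H\times H\to P^*(H)$ (nonempty subsets), extended to subsets by unions, that is associative, has a unique identity $e$ ($e*x=x*e=\{x\}$), unique inverses $f^{-1}$ with $e\in(f^{-1}*f)\cap(f*f^{-1})$, and satisfies reversibility ($c\in a*b\Rightarrow a\in c*b^{-1}$ and $b\in a^{-1}*c$). A hypergroup homomorphism $f$ satisfies $f(a*b)\subseteq f(a)*f(b)$. A morphism of association schemes $S$ on $X$ to $T$ on $Y$ is $f:X\cup S\to Y\cup T$ with $f(X)\subseteq Y$, $f(S)\subseteq T$, and $(f(x),f(y))\in f(p)$ for all $(x,y)\in p\in S$; it is admissible if whenever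 $(f(x),y)\in f(p)$ ($x\in X,y\in Y,p\in S$) there is $z\in X$ with $(x,z)\in p$ and $f(z)=y$. *)

theory Defs
  imports Main
begin

definition row :: "'a set \<Rightarrow> ('a \<times> 'a) set \<Rightarrow> 'a \<Rightarrow> 'a set" where
  "row X p x = {y \<in> X. (x, y) \<in> p}"

definition finite_assoc_scheme :: "'a set \<Rightarrow> ('a \<times> 'a) set set \<Rightarrow> bool" where
  "finite_assoc_scheme X S \<longleftrightarrow>
     finite X \<and> X \<noteq> {} \<and>
     (\<forall>p\<in>S. p \<noteq> {}) \<and>
     (\<forall>p\<in>S. \<forall>q\<in>S. p \<noteq> q \<longrightarrow> p \<inter> q = {}) \<and>
     \<Union>S = X \<times> X \<and>
     Id_on X \<in> S \<and>
     (\<forall>p\<in>S. converse p \<in> S) \<and>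
     (\<forall>p\<in>S. \<forall>q\<in>S. \<forall>r\<in>S. \<exists>n::nat. \<forall>y\<in>X. \<forall>z\<in>row X r y.
          card (row X p y \<inter> row X (converse q) z) = n)"

definition isect_num :: "'a set \<Rightarrow> ('a \<times> 'a) set \<Rightarrow> ('a \<times> 'a) set \<Rightarrow> ('a \<times> 'a) set \<Rightarrow> nat" where
  "isect_num X p q r = (SOME n. \<forall>y\<in>X. \<forall>z\<in>row X r y.
          card (row X p y \<inter> row X (converse q) z) = n)"

definition cmult :: "'a set \<Rightarrow> ('a \<times> 'a) set set \<Rightarrow> ('a \<times> 'a) set \<Rightarrow> ('a \<times> 'a) set \<Rightarrow> ('a \<times> 'a) set set" where
  "cmult X S p q = {r \<in> S. isect_num X p q r \<ge> 1}"

definition hset :: "('h \<Rightarrow> 'h \<Rightarrow> 'h set) \<Rightarrow> 'h set \<Rightarrow> 'h set \<Rightarrow> 'h set" where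
  "hset m A B = (\<Union>a\<in>A. \<Union>b\<in>B. m a b)"

definition hypergroup :: "'h set \<Rightarrow> ('h \<Rightarrow> 'h \<Rightarrow> 'h set) \<Rightarrow> 'h \<Rightarrow> ('h \<Rightarrow> 'h) \<Rightarrow> bool" where
  "hypergroup H m e iv \<longleftrightarrow>
     H \<noteq> {} \<and>
     (\<forall>a\<in>H. \<forall>b\<in>H. m a b \<subseteq> H \<and> m a b \<noteq> {}) \<and>
     (\<forall>a\<in>H. \<forall>b\<in>H. \<forall>c\<in>H. hset m (m a b) {c} = hset m {a} (m b c)) \<and>
     e \<in> H \<and> (\<forall>x\<in>H. m e x = {x} \<and> m x e = {x}) \<and>
     (\<forall>e'\<in>H. (\<forall>x\<in>H. m e' x = {x} \<and> m x e' = {x}) \<longrightarrow> e' = e) \<and>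
     (\<forall>f\<in>H. iv f \<in> H \<and> e \<in> m (iv f) f \<inter> m f (iv f) \<and>
        (\<forall>g\<in>H. e \<in> m g f \<inter> m f g \<longrightarrow> g = iv f)) \<and>
     (\<forall>a\<in>H. \<forall>b\<in>H. \<forall>c\<in>H. c \<in> m a b \<longrightarrow> a \<in> m c (iv b) \<and> b \<in> m (iv a) c)"

definition hypergroup_hom :: "'h set \<Rightarrow> ('h \<Rightarrow> 'h \<Rightarrow> 'h set) \<Rightarrow> 'k set \<Rightarrow> ('k \<Rightarrow> 'k \<Rightarrow> 'k set) \<Rightarrow> ('h \<Rightarrow> 'k) \<Rightarrow> bool" where
  "hypergroup_hom H m H' m' f \<longleftrightarrow>
     f ` H \<subseteq> H' \<and> (\<forall>a\<in>H. \<forall>b\<in>H. f ` (m a b) \<subseteq> m' (f a) (f b))"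

definition scheme_hypergroup :: "'a set \<Rightarrow> ('a \<times> 'a) set set \<Rightarrow> bool" where
  "scheme_hypergroup X S \<longleftrightarrow> hypergroup S (cmult X S) (Id_on X) converse"

text \<open>A morphism f : X \<union> S \<rightarrow> Y \<union> T is given by its two components fX (on points) and fS (on relations).\<close>
definition scheme_morphism :: "'a set \<Rightarrow> ('a \<times> 'a) set set \<Rightarrow> 'b set \<Rightarrow> ('b \<times> 'b) set set
    \<Rightarrow> ('a \<Rightarrow> 'b) \<Rightarrow> (('a \<times> 'a) set \<Rightarrow> ('b \<times> 'b) set) \<Rightarrow> bool" where
  "scheme_morphism X S Y T fX fS \<longleftrightarrow>
     fX ` X \<subseteq> Y \<and> fS ` S \<subseteq> T \<and>
     (\<forall>p\<in>S. \<forall>x y. (x, y) \<in> p \<longrightarrow> (fX x, fX y) \<in> fS p)"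

definition admissible_morphism :: "'a set \<Rightarrow> ('a \<times> 'a) set set \<Rightarrow> 'b set \<Rightarrow> ('b \<times> 'b) set set
    \<Rightarrow> ('a \<Rightarrow> 'b) \<Rightarrow> (('a \<times> 'a) set \<Rightarrow> ('b \<times> 'b) set) \<Rightarrow> bool" where
  "admissible_morphism X S Y T fX fS \<longleftrightarrow>
     scheme_morphism X S Y T fX fS \<and>
     (\<forall>x\<in>X. \<forall>y\<in>Y. \<forall>p\<in>S. (fX x, y) \<in> fS p \<longrightarrow> (\<exists>z\<in>X. (x, z) \<in> p \<and> fX z = y))"

end

theory Submission
  imports Defs
begin

text \<open>Because the relations of a scheme are the blocks of a partition of \<open>X \<times> X\<close>, the intersection
  number \<open>a\<^sub>p\<^sub>q\<^sup>r\<close> is positive exactly when \<open>r\<close> meets \<open>p O q\<close>, and then \<open>r \<subseteq> p O q\<close>. Hence the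
  complex product \<open>pq\<close> is the set of blocks covering \<open>p O q\<close>, and the products of subsets of \<open>S\<close>
  are the blocks covering the corresponding compositions. Associativity, identity, inverses and
  reversibility of \<open>\<^bold>H(S)\<close> are thereby reduced to the corresponding facts about composition and
  converse of relations. A morphism maps witnesses \<open>(y,w) \<in> p, (w,z) \<in> q\<close> of \<open>(y,z) \<in> r \<inter> p O q\<close> to
  witnesses in the target scheme, which gives the homomorphism property; admissibility is only
  needed for composites to be admissible again.\<close>

lemma finite_assoc_schemeD:
  assumes "finite_assoc_scheme X S"
  shows "finite X" and "Id_on X \<in> S" and "\<And>p. p \<in> S \<Longrightarrow> converse p \<in> S"
    and "\<And>p. p \<in> S \<Longrightarrow> p \<noteq> {}" and "\<And>p. p \<in> S \<Longrightarrow> p \<subseteq> X \<times> X"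
    and "\<And>x y. x \<in> X \<Longrightarrow> y \<in> X \<Longrightarrow> \<exists>r\<in>S. (x, y) \<in> r"
  using assms unfolding finite_assoc_scheme_def by blast+

lemma scheme_relations_eqI:
  "finite_assoc_scheme X S \<Longrightarrow> p \<in> S \<Longrightarrow> q \<in> S \<Longrightarrow> (x, y) \<in> p \<Longrightarrow> (x, y) \<in> q \<Longrightarrow> p = q"
  unfolding finite_assoc_scheme_def by blast

lemma finite_scheme_relations:
  assumes "finite_assoc_scheme X S"
  shows "finite S"
proof (rule finite_subset)
  show "S \<subseteq> Pow (X \<times> X)" using finite_assoc_schemeD(5)[OF assms] by blast
  show "finite (Pow (X \<times> X))" using finite_assoc_schemeD(1)[OF assms] by simp
qed

lemma scheme_blocks_meeting_relation:
  assumes SX: "finite_assoc_scheme X S" and p: "p \<in> S"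
  shows "{r \<in> S. r \<inter> p \<noteq> {}} = {p}"
proof -
  have "r = p" if "r \<in> S" "a \<in> r" "a \<in> p" for r a
    using scheme_relations_eqI[OF SX that(1) p, of "fst a" "snd a"] that by simp
  then show ?thesis using finite_assoc_schemeD(4)[OF SX p] p by blast
qed

lemma isect_num_eq_card:
  assumes SX: "finite_assoc_scheme X S" and S: "p \<in> S" "q \<in> S" "r \<in> S" and yz: "(y, z) \<in> r"
  shows "isect_num X p q r = card {w. (y, w) \<in> p \<and> (w, z) \<in> q}"
proof -
  have row_inter: "row X p y' \<inter> row X (converse q) z' = {w. (y', w) \<in> p \<and> (w, z') \<in> q}" for y' z'
    using finite_assoc_schemeD(5)[OF SX \<open>p \<in> S\<close>] unfolding row_def by blast
  let ?const = "\<lambda>n. \<forall>y\<in>X. \<forall>z\<in>row X r y. card (row X p y \<inter> row X (converse q) z) = n"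
  have "\<exists>n. ?const n"
    using SX S unfolding finite_assoc_scheme_def by blast
  then have "?const (isect_num X p q r)"
    unfolding isect_num_def by (rule someI_ex)
  moreover have "y \<in> X" "z \<in> row X r y"
    using yz finite_assoc_schemeD(5)[OF SX \<open>r \<in> S\<close>] unfolding row_def by auto
  ultimately show ?thesis by (simp add: row_inter)
qed

lemma isect_num_pos_iff:
  assumes SX: "finite_assoc_scheme X S" and S: "p \<in> S" "q \<in> S" "r \<in> S" and yz: "(y, z) \<in> r"
  shows "isect_num X p q r \<ge> 1 \<longleftrightarrow> (y, z) \<in> p O q"
proof -
  have "{w. (y, w) \<in> p \<and> (w, z) \<in> q} \<subseteq> X"
    using finite_assoc_schemeD(5)[OF SX \<open>p \<in> S\<close>] by blast
  then have "finite {w. (y, w) \<in> p \<and> (w, z) \<in> q}"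
    using finite_assoc_schemeD(1)[OF SX] finite_subset by blast
  then show ?thesis
    using isect_num_eq_card[OF assms] by (auto simp: Suc_le_eq card_gt_0_iff)
qed

lemma cmult_eq:
  assumes SX: "finite_assoc_scheme X S" and "p \<in> S" "q \<in> S"
  shows "cmult X S p q = {r \<in> S. r \<inter> (p O q) \<noteq> {}}"
proof -
  have "isect_num X p q r \<ge> 1 \<longleftrightarrow> r \<inter> (p O q) \<noteq> {}" if r: "r \<in> S" for r
  proof -
    obtain y z where yz: "(y, z) \<in> r" using finite_assoc_schemeD(4)[OF SX r] by fast
    show ?thesis
    proof
      assume "isect_num X p q r \<ge> 1"
      then show "r \<inter> (p O q) \<noteq> {}" using isect_num_pos_iff[OF assms r yz] yz by blast
    next
      assume "r \<inter> (p O q) \<noteq> {}"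
      then obtain y' z' where "(y', z') \<in> r" "(y', z') \<in> p O q" by auto
      then show "isect_num X p q r \<ge> 1" using isect_num_pos_iff[OF assms r] by blast
    qed
  qed
  then show ?thesis unfolding cmult_def by blast
qed

lemma cmult_subset_relcomp:
  assumes SX: "finite_assoc_scheme X S" and "p \<in> S" "q \<in> S" and r: "r \<in> cmult X S p q"
  shows "r \<subseteq> p O q"
proof
  fix a assume "a \<in> r"
  have "r \<in> S" "isect_num X p q r \<ge> 1" using r unfolding cmult_def by auto
  then show "a \<in> p O q"
    using isect_num_pos_iff[OF assms(1-3) \<open>r \<in> S\<close>] \<open>a \<in> r\<close> by (cases a) blast
qed

lemma Union_cmult:
  assumes SX: "finite_assoc_scheme X S" and p: "p \<in> S" and q: "q \<in> S"
  shows "\<Union> (cmult X S p q) = p O q"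
proof
  show "\<Union> (cmult X S p q) \<subseteq> p O q"
    using cmult_subset_relcomp[OF assms] by blast
  show "p O q \<subseteq> \<Union> (cmult X S p q)"
  proof
    fix a assume a: "a \<in> p O q"
    then obtain y z where "a = (y, z)" "y \<in> X" "z \<in> X"
      using finite_assoc_schemeD(5)[OF SX p] finite_assoc_schemeD(5)[OF SX q] by blast
    then obtain r where "r \<in> S" "a \<in> r"
      using finite_assoc_schemeD(6)[OF SX] by blast
    then show "a \<in> \<Union> (cmult X S p q)"
      using a cmult_eq[OF assms] by blast
  qed
qed

lemma hset_cmult_eq:
  assumes SX: "finite_assoc_scheme X S" and "A \<subseteq> S" "B \<subseteq> S"
  shows "hset (cmult X S) A B = {r \<in> S. r \<inter> (\<Union>A O \<Union>B) \<noteq> {}}"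
proof -
  have "hset (cmult X S) A B = (\<Union>a\<in>A. \<Union>b\<in>B. {r \<in> S. r \<inter> (a O b) \<noteq> {}})"
    unfolding hset_def using assms by (intro SUP_cong refl cmult_eq[OF SX]) blast+
  also have "\<dots> = {r \<in> S. r \<inter> (\<Union>A O \<Union>B) \<noteq> {}}" by blast
  finally show ?thesis .
qed

lemma cmult_assoc:
  assumes SX: "finite_assoc_scheme X S" and S: "a \<in> S" "b \<in> S" "c \<in> S"
  shows "hset (cmult X S) (cmult X S a b) {c} = hset (cmult X S) {a} (cmult X S b c)"
proof -
  have "cmult X S a b \<subseteq> S" "cmult X S b c \<subseteq> S" unfolding cmult_def by auto
  then show ?thesis
    using S by (simp add: hset_cmult_eq[OF SX] Union_cmult[OF SX] O_assoc)
qed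

lemma cmult_Id_on_left:
  assumes SX: "finite_assoc_scheme X S" and p: "p \<in> S"
  shows "cmult X S (Id_on X) p = {p}"
proof -
  have "Id_on X O p = p" using finite_assoc_schemeD(5)[OF SX p] by blast
  then show ?thesis
    using cmult_eq[OF SX finite_assoc_schemeD(2)[OF SX] p] scheme_blocks_meeting_relation[OF SX p]
    by simp
qed

lemma cmult_Id_on_right:
  assumes SX: "finite_assoc_scheme X S" and p: "p \<in> S"
  shows "cmult X S p (Id_on X) = {p}"
proof -
  have "p O Id_on X = p" using finite_assoc_schemeD(5)[OF SX p] by blast
  then show ?thesis
    using cmult_eq[OF SX p finite_assoc_schemeD(2)[OF SX]] scheme_blocks_meeting_relation[OF SX p]
    by simp
qed

lemma Id_on_in_cmult_iff:
  assumes SX: "finite_assoc_scheme X S" and p: "p \<in> S" and q: "q \<in> S"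
  shows "Id_on X \<in> cmult X S p q \<longleftrightarrow> q = converse p"
proof
  assume "Id_on X \<in> cmult X S p q"
  then have "Id_on X \<inter> (p O q) \<noteq> {}" using cmult_eq[OF SX p q] by simp
  then obtain x w where "(x, w) \<in> p" "(w, x) \<in> q" by auto
  then show "q = converse p"
    using scheme_relations_eqI[OF SX q finite_assoc_schemeD(3)[OF SX p], of w x] by simp
next
  assume q_conv: "q = converse p"
  obtain x y where xy: "(x, y) \<in> p" using finite_assoc_schemeD(4)[OF SX p] by fast
  then have "x \<in> X" using finite_assoc_schemeD(5)[OF SX p] by blast
  with xy q_conv have "(x, x) \<in> Id_on X \<inter> (p O q)" by blast
  then show "Id_on X \<in> cmult X S p q"
    using cmult_eq[OF SX p q] finite_assoc_schemeD(2)[OF SX] by blast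
qed

text \<open>With \<open>(u, v) \<in> p\<close>, the number \<open>a\<^sub>p\<^sub>p\<^sub>*\<^sup>1\<close> is positive at \<open>(u, u)\<close>, hence also at \<open>(y, y)\<close>.\<close>

lemma scheme_relation_successor:
  assumes SX: "finite_assoc_scheme X S" and p: "p \<in> S" and y: "y \<in> X"
  shows "\<exists>z. (y, z) \<in> p"
proof -
  note pos_iff = isect_num_pos_iff[OF SX p finite_assoc_schemeD(3)[OF SX p] finite_assoc_schemeD(2)[OF SX]]
  obtain u v where "(u, v) \<in> p" using finite_assoc_schemeD(4)[OF SX p] by fast
  moreover then have "(u, u) \<in> Id_on X" using finite_assoc_schemeD(5)[OF SX p] by blast
  ultimately have "isect_num X p (converse p) (Id_on X) \<ge> 1" using pos_iff by blast
  then have "(y, y) \<in> p O converse p" using pos_iff y by blast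
  then show ?thesis by blast
qed

lemma cmult_nonempty:
  assumes SX: "finite_assoc_scheme X S" and p: "p \<in> S" and q: "q \<in> S"
  shows "cmult X S p q \<noteq> {}"
proof -
  obtain x y where xy: "(x, y) \<in> p" using finite_assoc_schemeD(4)[OF SX p] by fast
  moreover have "y \<in> X" using xy finite_assoc_schemeD(5)[OF SX p] by blast
  ultimately obtain z where "(x, z) \<in> p O q"
    using scheme_relation_successor[OF SX q] by blast
  then have "p O q \<noteq> {}" by blast
  then show ?thesis using Union_cmult[OF assms] by auto
qed

lemma cmult_reversible:
  assumes SX: "finite_assoc_scheme X S" and S: "a \<in> S" "b \<in> S" "c \<in> S"
    and c: "c \<in> cmult X S a b"
  shows "a \<in> cmult X S c (converse b)" and "b \<in> cmult X S (converse a) c"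
proof -
  note conv = finite_assoc_schemeD(3)[OF SX]
  have "c \<inter> (a O b) \<noteq> {}" using c cmult_eq[OF SX S(1,2)] by simp
  then obtain y w z where yz: "(y, z) \<in> c" and yw: "(y, w) \<in> a" and wz: "(w, z) \<in> b"
    by auto
  have "(y, w) \<in> c O converse b" using yz wz by blast
  then show "a \<in> cmult X S c (converse b)"
    using cmult_eq[OF SX S(3) conv[OF S(2)]] S(1) yw by blast
  have "(w, z) \<in> converse a O c" using yw yz by blast
  then show "b \<in> cmult X S (converse a) c"
    using cmult_eq[OF SX conv[OF S(1)] S(3)] S(2) wz by blast
qed

theorem scheme_hypergroupI:
  assumes SX: "finite_assoc_scheme X S"
  shows "scheme_hypergroup X S"
  unfolding scheme_hypergroup_def hypergroup_def
proof (intro conjI ballI impI)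
  note Id = finite_assoc_schemeD(2)[OF SX] and conv = finite_assoc_schemeD(3)[OF SX]
  show "S \<noteq> {}" "Id_on X \<in> S" using Id by auto
  show "cmult X S a b \<subseteq> S" for a b
    unfolding cmult_def by blast
  show "cmult X S a b \<noteq> {}" if "a \<in> S" "b \<in> S" for a b
    using cmult_nonempty[OF SX that] .
  show "hset (cmult X S) (cmult X S a b) {c} = hset (cmult X S) {a} (cmult X S b c)"
    if "a \<in> S" "b \<in> S" "c \<in> S" for a b c
    using cmult_assoc[OF SX that] .
  show "cmult X S (Id_on X) p = {p}" "cmult X S p (Id_on X) = {p}" if "p \<in> S" for p
    using cmult_Id_on_left[OF SX that] cmult_Id_on_right[OF SX that] by simp_all
  show "e = Id_on X" if "e \<in> S" "\<forall>p\<in>S. cmult X S e p = {p} \<and> cmult X S p e = {p}" for e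
  proof -
    have "cmult X S e (Id_on X) = {Id_on X}" using bspec[OF that(2) Id] by simp
    then show ?thesis using cmult_Id_on_right[OF SX that(1)] by simp
  qed
  show "converse p \<in> S" "Id_on X \<in> cmult X S (converse p) p \<inter> cmult X S p (converse p)"
    if "p \<in> S" for p
    using that conv[OF that] Id_on_in_cmult_iff[OF SX that conv[OF that]]
      Id_on_in_cmult_iff[OF SX conv[OF that] that] by simp_all
  show "q = converse p" if "p \<in> S" "q \<in> S" "Id_on X \<in> cmult X S q p \<inter> cmult X S p q" for p q
    using Id_on_in_cmult_iff[OF SX that(1,2)] that(3) by simp
  show "a \<in> cmult X S c (converse b)" "b \<in> cmult X S (converse a) c"
    if "a \<in> S" "b \<in> S" "c \<in> S" "c \<in> cmult X S a b" for a b c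
    using cmult_reversible[OF SX that] by simp_all
qed

theorem scheme_morphism_hypergroup_hom:
  assumes SX: "finite_assoc_scheme X S" and TY: "finite_assoc_scheme Y T"
    and f: "scheme_morphism X S Y T fX fS"
  shows "hypergroup_hom S (cmult X S) T (cmult Y T) fS"
proof -
  have fS: "fS ` S \<subseteq> T" and edges: "\<And>p x y. p \<in> S \<Longrightarrow> (x, y) \<in> p \<Longrightarrow> (fX x, fX y) \<in> fS p"
    using f unfolding scheme_morphism_def by auto
  have "fS r \<in> cmult Y T (fS p) (fS q)" if p: "p \<in> S" and q: "q \<in> S" and "r \<in> cmult X S p q"
    for p q r
  proof -
    obtain y w z where r: "r \<in> S" "(y, z) \<in> r" "(y, w) \<in> p" "(w, z) \<in> q"
      using \<open>r \<in> cmult X S p q\<close> cmult_eq[OF SX p q] by blast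
    then have "(fX y, fX z) \<in> fS r \<inter> (fS p O fS q)" using edges p q by blast
    then show ?thesis using cmult_eq[OF TY] fS p q r by blast
  qed
  then show ?thesis using fS unfolding hypergroup_hom_def by blast
qed

lemma admissible_morphism_id: "admissible_morphism X S X S id id"
  unfolding admissible_morphism_def scheme_morphism_def by auto

lemma admissible_morphism_comp:
  assumes f: "admissible_morphism X S Y T fX fS" and g: "admissible_morphism Y T Z U gX gS"
  shows "admissible_morphism X S Z U (gX \<circ> fX) (gS \<circ> fS)"
proof -
  have fX: "fX ` X \<subseteq> Y" and fS: "fS ` S \<subseteq> T"
    and f_edge: "\<forall>p\<in>S. \<forall>x y. (x, y) \<in> p \<longrightarrow> (fX x, fX y) \<in> fS p"
    and f_lift: "\<forall>x\<in>X. \<forall>y\<in>Y. \<forall>p\<in>S. (fX x, y) \<in> fS p \<longrightarrow> (\<exists>z\<in>X. (x, z) \<in> p \<and> fX z = y)"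
    using f unfolding admissible_morphism_def scheme_morphism_def by simp_all
  have gX: "gX ` Y \<subseteq> Z" and gS: "gS ` T \<subseteq> U"
    and g_edge: "\<forall>p\<in>T. \<forall>x y. (x, y) \<in> p \<longrightarrow> (gX x, gX y) \<in> gS p"
    and g_lift: "\<forall>x\<in>Y. \<forall>y\<in>Z. \<forall>p\<in>T. (gX x, y) \<in> gS p \<longrightarrow> (\<exists>z\<in>Y. (x, z) \<in> p \<and> gX z = y)"
    using g unfolding admissible_morphism_def scheme_morphism_def by simp_all
  have lift: "\<exists>z\<in>X. (x, z) \<in> p \<and> gX (fX z) = w"
    if x: "x \<in> X" and w: "w \<in> Z" and p: "p \<in> S" and xw: "(gX (fX x), w) \<in> gS (fS p)" for x w p
  proof -
    have "fX x \<in> Y" "fS p \<in> T" using fX fS x p by blast+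
    then obtain y where y: "y \<in> Y" "(fX x, y) \<in> fS p" "gX y = w"
      using g_lift w xw by blast
    then obtain z where "z \<in> X" "(x, z) \<in> p" "fX z = y"
      using f_lift x p by blast
    then show ?thesis using y by blast
  qed
  have "(gX \<circ> fX) ` X \<subseteq> Z" "(gS \<circ> fS) ` S \<subseteq> U"
    using fX gX fS gS by (fastforce simp: image_subset_iff)+
  moreover have "\<forall>p\<in>S. \<forall>x y. (x, y) \<in> p \<longrightarrow> ((gX \<circ> fX) x, (gX \<circ> fX) y) \<in> (gS \<circ> fS) p"
    using f_edge g_edge fS by (simp add: image_subset_iff)
  ultimately show ?thesis
    unfolding admissible_morphism_def scheme_morphism_def using lift by simp
qed

theorem corollary3p2:
  fixes X :: "'a set" and S :: "('a \<times> 'a) set set"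
    and Y :: "'b set" and T :: "('b \<times> 'b) set set"
    and Z :: "'c set" and U :: "('c \<times> 'c) set set"
    and fX :: "'a \<Rightarrow> 'b" and fS :: "('a \<times> 'a) set \<Rightarrow> ('b \<times> 'b) set"
    and gX :: "'b \<Rightarrow> 'c" and gS :: "('b \<times> 'b) set \<Rightarrow> ('c \<times> 'c) set"
  assumes SX: "finite_assoc_scheme X S"
    and TY: "finite_assoc_scheme Y T"
    and UZ: "finite_assoc_scheme Z U"
    and f: "admissible_morphism X S Y T fX fS"
    and g: "admissible_morphism Y T Z U gX gS"
  shows
    \<comment> \<open>object part: H(S) is a finite hypergroup\<close>
    "(finite S \<and> scheme_hypergroup X S)
     \<comment> \<open>morphism part: H(f) = restriction of f to S is a hypergroup homomorphism\<close>
     \<and> hypergroup_hom S (cmult X S) T (cmult Y T) fS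
     \<comment> \<open>source category: identities and composites are admissible morphisms\<close>
     \<and> admissible_morphism X S X S id id
     \<and> admissible_morphism X S Z U (gX \<circ> fX) (gS \<circ> fS)
     \<comment> \<open>functor laws on the restrictions to S\<close>
     \<and> (\<forall>p\<in>S. id p = p)
     \<and> (\<forall>p\<in>S. (gS \<circ> fS) p = gS (fS p))"
proof -
  have "scheme_morphism X S Y T fX fS"
    using f unfolding admissible_morphism_def by blast
  then show ?thesis
    using finite_scheme_relations[OF SX] scheme_hypergroupI[OF SX]
      scheme_morphism_hypergroup_hom[OF SX TY] admissible_morphism_id
      admissible_morphism_comp[OF f g]
    by simp
qed

end
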